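(* Suppose that a domino, with holes $H_1$, $H_2$ and edge $xy$, is the underlying graph of some oriented graph $G$ derived from a Burling tree $(T,r,\ell,c)$. Then there exist $z\in\{x,y\}$ and $i\in\{1,2\}$ such that $z$ is the pivot of $H_i$ and $z$ is a subordinate vertex of $H_{3-i}$.
   Context: Graphs are finite, without loops or multiple edges; oriented graphs have no pair of opposite arcs. A hole is an induced cycle of length at least $4$. A domino is a graph made of an edge $xy$ and two holes $H_1,H_2$ both containing the edge $xy$, such that $V(H_1)\cap V(H_2)=\{x,y\}$ and there are no edges other than those of $H_1$ and $H_2$. In a rooted tree $T$ with root $r$, each non-root vertex $v$ has a parent $p(v)$; children, leaves, ancestors and descendants are as usual. A branch is a sequence $v_1\dots v_k$ ($k\ge0$) with $v_i$ the parent of $v_{i+1}$; it starts at $v_1$. A Burling tree is a 4-tuple $(T,r,\ell,c)$: $T$ a rooted tree with root $r$; $\ell$ assigns to each non-leaf vertex $v$ one of its children $\ell(v)$ (the last-born of $v$); $c$ assigns to every vertex $v$ that is neither the root nor a last-born the vertex-set of a (possibly empty) branch starting at $\ell(p(v))$, and $c(v)=\emptyset$ if $v$ is the root or a last-born. The oriented graph fully derived from it has vertex-set $V(T)$ and an arc $uv$ iff $v\in c(u)$; an oriented graph is derived from the Burling tree if it is an induced subgraph of the fully derived one. A hole of an oriented graph means a hole of its underlying graph. If $G$ is derived from $T$ and $H$ is a hole of $G$, then (as established in the paper) $H$ with the inherited orientation has exactly two sources, called its antennas, and exactly two sinks; exactly one of these sinks is adjacent to both antennas and is an ancestor in $T$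 of all vertices of $H$ other than the antennas: it is the pivot of $H$. A vertex of $H$ is subordinate if it is neither the pivot nor an antenna of $H$. *)

theory Defs
  imports Main
begin

text \<open>A rooted tree is given by a finite vertex set V, a root r and a parent
function p (only meaningful on non-root vertices).\<close>

definition rooted_tree :: "'a set \<Rightarrow> 'a \<Rightarrow> ('a \<Rightarrow> 'a) \<Rightarrow> bool" where
  "rooted_tree V r p \<longleftrightarrow> finite V \<and> r \<in> V \<and>
     (\<forall>v\<in>V. v \<noteq> r \<longrightarrow> p v \<in> V) \<and>
     (\<forall>v\<in>V. \<exists>n. (p ^^ n) v = r)"

definition children :: "'a set \<Rightarrow> 'a \<Rightarrow> ('a \<Rightarrow> 'a) \<Rightarrow> 'a \<Rightarrow> 'a set" where
  "children V r p v = {u \<in> V. u \<noteq> r \<and> p u = v}"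

definition is_leaf :: "'a set \<Rightarrow> 'a \<Rightarrow> ('a \<Rightarrow> 'a) \<Rightarrow> 'a \<Rightarrow> bool" where
  "is_leaf V r p v \<longleftrightarrow> children V r p v = {}"

text \<open>u is an ancestor of v (reflexive: every vertex is an ancestor of itself).\<close>
definition ancestor :: "'a set \<Rightarrow> 'a \<Rightarrow> ('a \<Rightarrow> 'a) \<Rightarrow> 'a \<Rightarrow> 'a \<Rightarrow> bool" where
  "ancestor V r p u v \<longleftrightarrow> (\<exists>vs. vs \<noteq> [] \<and> hd vs = u \<and> last vs = v \<and> set vs \<subseteq> V \<and>
      (\<forall>i. Suc i < length vs \<longrightarrow> vs ! Suc i \<noteq> r \<and> p (vs ! Suc i) = vs ! i))"

definition branch_set :: "'a set \<Rightarrow> 'a \<Rightarrow> ('a \<Rightarrow> 'a) \<Rightarrow> 'a \<Rightarrow> 'a set \<Rightarrow> bool" where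
  "branch_set V r p u B \<longleftrightarrow> B = {} \<or>
     (\<exists>vs. vs \<noteq> [] \<and> hd vs = u \<and> B = set vs \<and> set vs \<subseteq> V \<and>
      (\<forall>i. Suc i < length vs \<longrightarrow> vs ! Suc i \<noteq> r \<and> p (vs ! Suc i) = vs ! i))"

definition last_born :: "'a set \<Rightarrow> 'a \<Rightarrow> ('a \<Rightarrow> 'a) \<Rightarrow> ('a \<Rightarrow> 'a) \<Rightarrow> 'a \<Rightarrow> bool" where
  "last_born V r p l v \<longleftrightarrow> v \<in> V \<and> v \<noteq> r \<and> l (p v) = v"

definition burling_tree ::
  "'a set \<Rightarrow> 'a \<Rightarrow> ('a \<Rightarrow> 'a) \<Rightarrow> ('a \<Rightarrow> 'a) \<Rightarrow> ('a \<Rightarrow> 'a set) \<Rightarrow> bool" where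
  "burling_tree V r p l c \<longleftrightarrow> rooted_tree V r p \<and>
     (\<forall>v\<in>V. \<not> is_leaf V r p v \<longrightarrow> l v \<in> children V r p v) \<and>
     (\<forall>v\<in>V. (v = r \<or> last_born V r p l v) \<longrightarrow> c v = {}) \<and>
     (\<forall>v\<in>V. v \<noteq> r \<and> \<not> last_born V r p l v \<longrightarrow> branch_set V r p (l (p v)) (c v))"

text \<open>The oriented graph derived from the Burling tree with vertex set S (an induced
subgraph of the fully derived graph): arc u v iff v \<in> c u.\<close>
definition arc :: "('a \<Rightarrow> 'a set) \<Rightarrow> 'a set \<Rightarrow> 'a \<Rightarrow> 'a \<Rightarrow> bool" where
  "arc c S u v \<longleftrightarrow> u \<in> S \<and> v \<in> S \<and> v \<in> c u"

definition adj :: "('a \<Rightarrow> 'a set) \<Rightarrow> 'a set \<Rightarrow> 'a \<Rightarrow> 'a \<Rightarrow> bool" where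
  "adj c S u v \<longleftrightarrow> arc c S u v \<or> arc c S v u"

definition hole :: "('a \<Rightarrow> 'a set) \<Rightarrow> 'a set \<Rightarrow> 'a set \<Rightarrow> bool" where
  "hole c S H \<longleftrightarrow> H \<subseteq> S \<and>
     (\<exists>vs. distinct vs \<and> length vs \<ge> 4 \<and> set vs = H \<and>
        (\<forall>i < length vs. adj c S (vs ! i) (vs ! ((i + 1) mod length vs))) \<and>
        (\<forall>u\<in>H. \<forall>v\<in>H. adj c S u v \<longrightarrow>
           (\<exists>i < length vs. {u, v} = {vs ! i, vs ! ((i + 1) mod length vs)})))"

definition is_domino :: "('a \<Rightarrow> 'a set) \<Rightarrow> 'a set \<Rightarrow> 'a set \<Rightarrow> 'a set \<Rightarrow> 'a \<Rightarrow> 'a \<Rightarrow> bool" where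
  "is_domino c S H1 H2 x y \<longleftrightarrow>
     S = H1 \<union> H2 \<and> hole c S H1 \<and> hole c S H2 \<and> x \<noteq> y \<and> adj c S x y \<and>
     H1 \<inter> H2 = {x, y} \<and>
     (\<forall>u v. adj c S u v \<longrightarrow> ({u, v} \<subseteq> H1 \<or> {u, v} \<subseteq> H2))"

definition hole_source :: "('a \<Rightarrow> 'a set) \<Rightarrow> 'a set \<Rightarrow> 'a set \<Rightarrow> 'a \<Rightarrow> bool" where
  "hole_source c S H v \<longleftrightarrow> v \<in> H \<and> \<not> (\<exists>u\<in>H. arc c S u v)"

definition hole_sink :: "('a \<Rightarrow> 'a set) \<Rightarrow> 'a set \<Rightarrow> 'a set \<Rightarrow> 'a \<Rightarrow> bool" where
  "hole_sink c S H v \<longleftrightarrow> v \<in> H \<and> \<not> (\<exists>u\<in>H. arc c S v u)"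

abbreviation antenna :: "('a \<Rightarrow> 'a set) \<Rightarrow> 'a set \<Rightarrow> 'a set \<Rightarrow> 'a \<Rightarrow> bool" where
  "antenna c S H v \<equiv> hole_source c S H v"

definition pivot ::
  "'a set \<Rightarrow> 'a \<Rightarrow> ('a \<Rightarrow> 'a) \<Rightarrow> ('a \<Rightarrow> 'a set) \<Rightarrow> 'a set \<Rightarrow> 'a set \<Rightarrow> 'a \<Rightarrow> bool" where
  "pivot V r p c S H z \<longleftrightarrow> hole_sink c S H z \<and>
     (\<forall>a. antenna c S H a \<longrightarrow> adj c S z a) \<and>
     (\<forall>v\<in>H. \<not> antenna c S H v \<longrightarrow> ancestor V r p z v)"

definition subordinate ::
  "'a set \<Rightarrow> 'a \<Rightarrow> ('a \<Rightarrow> 'a) \<Rightarrow> ('a \<Rightarrow> 'a set) \<Rightarrow> 'a set \<Rightarrow> 'a set \<Rightarrow> 'a \<Rightarrow> bool" where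
  "subordinate V r p c S H v \<longleftrightarrow> v \<in> H \<and> \<not> antenna c S H v \<and> \<not> pivot V r p c S H v"

end

theory Submission
  imports Defs "HOL-Number_Theory.Cong"
begin

(* An arc t -> s of a graph derived from a Burling tree means that s lies on a branch starting at
   the last-born sibling of t.  Hence adjacent vertices are incomparable in the tree, the
   out-neighbours of a vertex are pairwise comparable, and an edge from a proper descendant of u
   to a non-descendant of u is an arc whose tail also points to u.

   In a hole some vertex has two out-neighbours (take a vertex of minimal depth or its
   in-neighbour), and the upper one of them is an ancestor of every vertex of the hole not
   adjacent to it: ancestry spreads along the path left after deleting it and its neighbours.
   Such an apex is the pivot, and its two neighbours are the antennas.

   For a domino with holes H1, H2 and edge xy: if neither pivot is x or y, ancestry spreads from
   each pivot through x or y into the other hole, so the two pivots are ancestors of each other,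
   which is absurd.  If the pivot of H1 is x, then y points to x, so x is no antenna of H2; were x
   the pivot of H2, then y would be an antenna of both holes, and of its two comparable
   out-neighbours other than x, the upper one would by the same spreading be an ancestor of x. *)

section \<open>Rooted trees\<close>

definition parent_rel :: "'a set \<Rightarrow> 'a \<Rightarrow> ('a \<Rightarrow> 'a) \<Rightarrow> ('a \<times> 'a) set" where
  "parent_rel V r p = {(p v, v) | v. v \<in> V \<and> v \<noteq> r}"

locale rooted =
  fixes V :: "'a set" and r :: 'a and p :: "'a \<Rightarrow> 'a"
  assumes rooted: "rooted_tree V r p"
begin

abbreviation anc :: "'a \<Rightarrow> 'a \<Rightarrow> bool" (infix "\<preceq>" 50) where
  "u \<preceq> v \<equiv> (u, v) \<in> (parent_rel V r p)\<^sup>*"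

definition depth :: "'a \<Rightarrow> nat" where
  "depth v = (LEAST n. (p ^^ n) v = r)"

lemma parent_in_V: "v \<in> V \<Longrightarrow> v \<noteq> r \<Longrightarrow> p v \<in> V"
  using rooted by (simp add: rooted_tree_def)

lemma depth_parent:
  assumes "v \<in> V" "v \<noteq> r"
  shows "depth v = Suc (depth (p v))"
proof -
  obtain n where n: "(p ^^ n) v = r"
    using rooted assms(1) by (auto simp: rooted_tree_def)
  have "(LEAST n. (p ^^ n) v = r) = Suc (LEAST m. (p ^^ Suc m) v = r)"
    by (rule Least_Suc) (use n assms(2) in auto)
  then show ?thesis
    by (simp add: depth_def funpow_swap1)
qed

lemma anc_parent: "v \<in> V \<Longrightarrow> v \<noteq> r \<Longrightarrow> p v \<preceq> v"
  by (auto simp: parent_rel_def)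

lemma anc_in_V: "u \<preceq> v \<Longrightarrow> v \<in> V \<Longrightarrow> u \<in> V"
  by (induction rule: rtrancl_induct) (auto simp: parent_rel_def parent_in_V)

lemma anc_parent_if_neq:
  assumes "u \<preceq> v" "u \<noteq> v"
  shows "u \<preceq> p v" and "v \<in> V" and "v \<noteq> r"
  using assms by (auto elim: rtranclE simp: parent_rel_def)

lemma anc_depth_le: "u \<preceq> v \<Longrightarrow> depth u \<le> depth v"
  by (induction rule: rtrancl_induct) (auto simp: parent_rel_def depth_parent)

lemma anc_depth_less: "u \<preceq> v \<Longrightarrow> u \<noteq> v \<Longrightarrow> depth u < depth v"
  using anc_parent_if_neq anc_depth_le depth_parent by (metis le_imp_less_Suc)

lemma anc_depth_eq: "u \<preceq> v \<Longrightarrow> depth u = depth v \<Longrightarrow> u = v"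
  using anc_depth_less by fastforce

lemma anc_antisym: "u \<preceq> v \<Longrightarrow> v \<preceq> u \<Longrightarrow> u = v"
  using anc_depth_le anc_depth_eq by (meson le_antisym)

lemma anc_linear: "u \<preceq> s \<Longrightarrow> w \<preceq> s \<Longrightarrow> u \<preceq> w \<or> w \<preceq> u"
proof (induction arbitrary: w rule: rtrancl_induct)
  case base
  then show ?case by blast
next
  case (step y s)
  show ?case
  proof (cases "w = s")
    case True
    then show ?thesis using step.hyps by auto
  next
    case False
    then have "w \<preceq> y"
      using step anc_parent_if_neq(1) by (auto simp: parent_rel_def)
    then show ?thesis using step.IH by blast
  qed
qed

definition downward_path :: "'a list \<Rightarrow> bool" where
  "downward_path vs \<longleftrightarrow> set vs \<subseteq> V \<and>
     (\<forall>i. Suc i < length vs \<longrightarrow> vs ! Suc i \<noteq> r \<and> p (vs ! Suc i) = vs ! i)"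

lemma downward_path_snoc:
  "downward_path (vs @ [v]) \<longleftrightarrow> downward_path vs \<and> v \<in> V \<and> (vs \<noteq> [] \<longrightarrow> v \<noteq> r \<and> p v = last vs)"
  unfolding downward_path_def
  by (auto simp: nth_append last_conv_nth less_Suc_eq) (metis length_0_conv old.nat.exhaust, metis diff_Suc_1')

lemma downward_path_interval:
  "downward_path vs \<Longrightarrow> vs \<noteq> [] \<Longrightarrow> set vs = {w. hd vs \<preceq> w \<and> w \<preceq> last vs}"
proof (induction vs rule: rev_induct)
  case Nil
  then show ?case by simp
next
  case (snoc v vs)
  show ?case
  proof (cases "vs = []")
    case True
    then show ?thesis using anc_antisym by auto
  next
    case False
    have v: "v \<in> V" "v \<noteq> r" "p v = last vs" and "downward_path vs"
      using snoc.prems(1) False by (simp_all add: downward_path_snoc)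
    then have IH: "set vs = {w. hd vs \<preceq> w \<and> w \<preceq> p v}"
      using snoc.IH False by simp
    have "hd vs \<preceq> p v" "p v \<preceq> v"
      using IH False hd_in_set anc_parent[OF v(1,2)] by blast+
    then show ?thesis
      using IH False anc_parent_if_neq(1) by (auto intro: rtrancl_trans)
  qed
qed

lemma downward_path_if_anc:
  assumes "u \<preceq> v" "v \<in> V"
  shows "\<exists>vs. vs \<noteq> [] \<and> hd vs = u \<and> last vs = v \<and> downward_path vs"
  using assms(1)
proof (induction rule: rtrancl_induct)
  case base
  then show ?case using anc_in_V[OF assms] by (intro exI[of _ "[u]"]) (simp add: downward_path_def)
next
  case (step y z)
  then obtain vs where "vs \<noteq> []" "hd vs = u" "last vs = y" "downward_path vs"
    by blast
  then show ?case using step.hyps(2)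
    by (intro exI[of _ "vs @ [z]"]) (auto simp: downward_path_snoc parent_rel_def)
qed

lemma ancestor_iff: "ancestor V r p u v \<longleftrightarrow> v \<in> V \<and> u \<preceq> v"
proof -
  have "ancestor V r p u v \<longleftrightarrow> (\<exists>vs. vs \<noteq> [] \<and> hd vs = u \<and> last vs = v \<and> downward_path vs)"
    unfolding ancestor_def downward_path_def by blast
  also have "\<dots> \<longleftrightarrow> v \<in> V \<and> u \<preceq> v"
  proof
    assume "\<exists>vs. vs \<noteq> [] \<and> hd vs = u \<and> last vs = v \<and> downward_path vs"
    then obtain vs where vs: "vs \<noteq> []" "hd vs = u" "last vs = v" "downward_path vs"
      by blast
    have "last vs \<in> set vs" "set vs \<subseteq> V"
      using vs(1,4) by (simp_all add: downward_path_def)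
    then show "v \<in> V \<and> u \<preceq> v"
      using downward_path_interval[OF vs(4,1)] vs(2,3) by auto
  qed (use downward_path_if_anc in blast)
  finally show ?thesis .
qed

lemma branch_set_interval:
  assumes "branch_set V r p u B" "B \<noteq> {}"
  obtains s where "s \<in> V" "B = {w. u \<preceq> w \<and> w \<preceq> s}"
proof -
  obtain vs where vs: "vs \<noteq> []" "hd vs = u" "B = set vs" "downward_path vs"
    using assms unfolding branch_set_def downward_path_def by blast
  then have "last vs \<in> V"
    by (auto simp: downward_path_def)
  then show thesis
    using that downward_path_interval[OF vs(4,1)] vs(2,3) by blast
qed

end

section \<open>Holes as cyclic sequences\<close>

lemma adj_sym: "adj c S u v \<longleftrightarrow> adj c S v u"
  by (auto simp: adj_def)

lemma mod_Suc_Suc_neq: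
  assumes "3 \<le> (n::nat)"
  shows "i mod n \<noteq> Suc (Suc i) mod n"
proof
  assume "i mod n = Suc (Suc i) mod n"
  then have "[i + 2 = i + 0] (mod n)"
    by (simp add: cong_def)
  then have "n dvd 2"
    by (metis cong_add_lcancel_nat cong_0_iff)
  then show False
    using assms dvd_imp_le[of n 2] by simp
qed

lemma mod_add_complement:
  assumes "0 < (n::nat)" "k < n"
  shows "(j + (k + (n - j mod n))) mod n = k"
proof -
  have "j mod n \<le> n"
    using assms(1) by simp
  then have "j mod n + (k + (n - j mod n)) = k + n"
    by simp
  then have "(j mod n + (k + (n - j mod n))) mod n = k"
    using assms by simp
  then show ?thesis
    by (simp add: mod_add_left_eq)
qed

definition hole_cycle :: "('a \<Rightarrow> 'a set) \<Rightarrow> 'a set \<Rightarrow> 'a set \<Rightarrow> 'a list \<Rightarrow> bool" where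
  "hole_cycle c S H vs \<longleftrightarrow> distinct vs \<and> length vs \<ge> 4 \<and> set vs = H \<and>
     (\<forall>i < length vs. adj c S (vs ! i) (vs ! ((i + 1) mod length vs))) \<and>
     (\<forall>u\<in>H. \<forall>v\<in>H. adj c S u v \<longrightarrow>
        (\<exists>i < length vs. {u, v} = {vs ! i, vs ! ((i + 1) mod length vs)}))"

lemma hole_iff_cycle: "hole c S H \<longleftrightarrow> H \<subseteq> S \<and> (\<exists>vs. hole_cycle c S H vs)"
  unfolding hole_def hole_cycle_def by blast

abbreviation cyc_nth :: "'a list \<Rightarrow> nat \<Rightarrow> 'a" where
  "cyc_nth vs i \<equiv> vs ! (i mod length vs)"

context
  fixes c :: "'a \<Rightarrow> 'a set" and S H :: "'a set" and vs :: "'a list"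
  assumes cycle: "hole_cycle c S H vs"
begin

lemma cycle_length: "length vs \<ge> 4"
  using cycle by (simp add: hole_cycle_def)

lemma length_pos: "0 < length vs"
  using cycle_length by linarith

lemma mod_length_less: "i mod length vs < length vs"
  using length_pos by (rule mod_less_divisor)

lemma cyc_nth_in: "cyc_nth vs i \<in> H"
  using cycle mod_length_less by (auto simp: hole_cycle_def)

lemma cyc_nth_eq_iff: "cyc_nth vs i = cyc_nth vs j \<longleftrightarrow> i mod length vs = j mod length vs"
  using cycle mod_length_less by (simp add: hole_cycle_def nth_eq_iff_index_eq)

lemma cyc_nth_adj: "adj c S (cyc_nth vs i) (cyc_nth vs (Suc i))"
proof -
  have "adj c S (vs ! (i mod length vs)) (vs ! ((i mod length vs + 1) mod length vs))"
    using cycle mod_length_less by (simp add: hole_cycle_def)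
  then show ?thesis
    by (simp add: mod_Suc_eq)
qed

lemma cyc_nth_onto:
  assumes "v \<in> H"
  obtains t where "t < length vs" "v = cyc_nth vs (j + t)"
proof -
  let ?n = "length vs"
  obtain k where k: "k < ?n" "v = vs ! k"
    using cycle assms by (auto simp: hole_cycle_def in_set_conv_nth)
  have "(j + (k + (?n - j mod ?n)) mod ?n) mod ?n = (j + (k + (?n - j mod ?n))) mod ?n"
    by (rule mod_add_right_eq)
  also have "\<dots> = k"
    using k(1) mod_length_less by (intro mod_add_complement) auto
  finally have "(j + (k + (?n - j mod ?n)) mod ?n) mod ?n = k" .
  then show thesis
    using that[of "(k + (?n - j mod ?n)) mod ?n"] k mod_length_less by simp
qed

lemma cyc_nth_neighbours:
  assumes "w \<in> H"
  shows "adj c S (cyc_nth vs (Suc i)) w \<longleftrightarrow> w = cyc_nth vs i \<or> w = cyc_nth vs (Suc (Suc i))"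
proof
  let ?n = "length vs"
  assume "adj c S (cyc_nth vs (Suc i)) w"
  moreover have "\<forall>u\<in>H. \<forall>v\<in>H. adj c S u v \<longrightarrow> (\<exists>k < ?n. {u, v} = {vs ! k, vs ! ((k + 1) mod ?n)})"
    using cycle by (simp add: hole_cycle_def)
  ultimately obtain k where "k < ?n" "{cyc_nth vs (Suc i), w} = {vs ! k, vs ! ((k + 1) mod ?n)}"
    using assms cyc_nth_in by blast
  then have "{cyc_nth vs (Suc i), w} = {cyc_nth vs k, cyc_nth vs (Suc k)}"
    by simp
  then consider "Suc i mod ?n = k mod ?n" "w = cyc_nth vs (Suc k)"
    | "Suc i mod ?n = Suc k mod ?n" "w = cyc_nth vs k"
    unfolding doubleton_eq_iff cyc_nth_eq_iff by blast
  then show "w = cyc_nth vs i \<or> w = cyc_nth vs (Suc (Suc i))"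
  proof cases
    case 1
    have "Suc (Suc i) mod ?n = Suc k mod ?n"
      using mod_Suc_eq[of "Suc i" ?n] mod_Suc_eq[of k ?n] 1(1) by simp
    then show ?thesis
      using 1(2) by simp
  next
    case 2
    have "i mod ?n = k mod ?n"
      using 2(1) cong_add_lcancel_nat[of 1 i k ?n] by (simp add: cong_def)
    then show ?thesis
      using 2(2) by simp
  qed
next
  show "w = cyc_nth vs i \<or> w = cyc_nth vs (Suc (Suc i)) \<Longrightarrow> adj c S (cyc_nth vs (Suc i)) w"
    using cyc_nth_adj[of i] cyc_nth_adj[of "Suc i"] adj_sym[of c S "cyc_nth vs i"] by auto
qed

lemma cyc_nth_neighbours_distinct: "cyc_nth vs i \<noteq> cyc_nth vs (Suc (Suc i))"
  using cyc_nth_eq_iff mod_Suc_Suc_neq cycle_length by simp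

lemma closed_neighbourhood_segment:
  "(\<lambda>k. cyc_nth vs (t + k)) ` {..<3} =
     {v \<in> H. v = cyc_nth vs (Suc t) \<or> adj c S (cyc_nth vs (Suc t)) v}"
proof -
  have "(\<lambda>k. cyc_nth vs (t + k)) ` {..<3} =
      {cyc_nth vs t, cyc_nth vs (Suc t), cyc_nth vs (Suc (Suc t))}"
    by (auto simp: numeral_3_eq_3 lessThan_Suc)
  then show ?thesis
    using cyc_nth_in cyc_nth_neighbours by auto
qed

lemma cycle_minus_segment:
  assumes "B = (\<lambda>t. cyc_nth vs (j + t)) ` {..<m}"
  shows "H - B = (\<lambda>t. cyc_nth vs (j + m + t)) ` {..<length vs - m}"
proof (intro equalityI subsetI)
  let ?n = "length vs"
  fix v
  assume v: "v \<in> H - B"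
  obtain t where t: "t < ?n" "v = cyc_nth vs (j + t)"
    using cyc_nth_onto[of v j] v by blast
  have "m \<le> t"
  proof (rule ccontr)
    assume "\<not> m \<le> t"
    then have "v \<in> B"
      using t(2) assms by auto
    then show False
      using v by blast
  qed
  then have "v = cyc_nth vs (j + m + (t - m))" "t - m < ?n - m"
    using t by (simp_all add: add.assoc)
  then show "v \<in> (\<lambda>t. cyc_nth vs (j + m + t)) ` {..<?n - m}"
    by blast
next
  let ?n = "length vs"
  fix v
  assume "v \<in> (\<lambda>t. cyc_nth vs (j + m + t)) ` {..<?n - m}"
  then obtain t where t: "t < ?n - m" "v = cyc_nth vs (j + (m + t))"
    by (auto simp: add.assoc)
  have "v \<notin> B"
  proof
    assume "v \<in> B"
    then obtain t' where t': "t' < m" "(j + (m + t)) mod ?n = (j + t') mod ?n"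
      using assms t(2) cyc_nth_eq_iff by auto
    have "(m + t) mod ?n = t' mod ?n"
      using t'(2) cong_add_lcancel_nat[of j "m + t" t' ?n] by (simp add: cong_def)
    then show False
      using t(1) t'(1) by simp
  qed
  then show "v \<in> H - B"
    using t(2) cyc_nth_in by blast
qed

lemma connected_cycle_minus_segment:
  assumes B: "B = (\<lambda>t. cyc_nth vs (j + t)) ` {..<m}"
    and closed: "\<forall>v\<in>X. \<forall>w\<in>H. adj c S v w \<longrightarrow> w \<in> X \<or> w \<in> B"
    and x: "x \<in> X" "x \<in> H - B"
  shows "H - B \<subseteq> X"
proof -
  define seg where "seg t = cyc_nth vs (j + m + t)" for t
  let ?k = "length vs - m"
  have path: "H - B = seg ` {..<?k}"
    unfolding seg_def by (rule cycle_minus_segment[OF B])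
  have seg_step: "seg t \<in> X \<longleftrightarrow> seg (Suc t) \<in> X" if "Suc t < ?k" for t
  proof -
    have "adj c S (seg t) (seg (Suc t))"
      unfolding seg_def using cyc_nth_adj[of "j + m + t"] by simp
    then have "adj c S (seg t) (seg (Suc t))" "adj c S (seg (Suc t)) (seg t)"
      by (auto simp: adj_def)
    moreover have "seg t \<in> H - B" "seg (Suc t) \<in> H - B"
      using path that by auto
    ultimately show ?thesis
      using closed by blast
  qed
  have seg_all: "seg t \<in> X \<longleftrightarrow> seg 0 \<in> X" if "t < ?k" for t
    using that
  proof (induction t)
    case (Suc t)
    then show ?case
      using seg_step[of t] by simp
  qed simp
  obtain t0 where t0: "t0 < ?k" "x = seg t0"
    using path x(2) by blast
  show ?thesis
  proof
    fix v
    assume "v \<in> H - B"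
    then obtain t where t: "t < ?k" "v = seg t"
      using path by blast
    show "v \<in> X"
      using seg_all[OF t(1)] seg_all[OF t0(1)] t(2) t0(2) x(1) by blast
  qed
qed

end

lemma hole_two_neighbours:
  assumes "hole c S H" "v \<in> H"
  obtains a b where "a \<in> H" "b \<in> H" "a \<noteq> b" "\<forall>w\<in>H. adj c S v w \<longleftrightarrow> w = a \<or> w = b"
proof -
  obtain vs where cycle: "hole_cycle c S H vs"
    using assms(1) unfolding hole_iff_cycle by blast
  obtain t where "v = cyc_nth vs (1 + t)"
    using cyc_nth_onto[OF cycle assms(2), where j = 1] .
  then have v: "v = cyc_nth vs (Suc t)"
    by simp
  show thesis
  proof (rule that)
    show "cyc_nth vs t \<in> H" "cyc_nth vs (Suc (Suc t)) \<in> H"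
      by (rule cyc_nth_in[OF cycle])+
    show "cyc_nth vs t \<noteq> cyc_nth vs (Suc (Suc t))"
      by (rule cyc_nth_neighbours_distinct[OF cycle])
    show "\<forall>w\<in>H. adj c S v w \<longleftrightarrow> w = cyc_nth vs t \<or> w = cyc_nth vs (Suc (Suc t))"
      unfolding v by (simp add: cyc_nth_neighbours[OF cycle])
  qed
qed

lemma hole_other_neighbour:
  assumes "hole c S H" "v \<in> H" "u \<in> H" "adj c S v u"
  obtains w where "w \<in> H" "w \<noteq> u" "adj c S v w" "\<forall>w'\<in>H. adj c S v w' \<longrightarrow> w' = u \<or> w' = w"
proof -
  obtain a b where "a \<in> H" "b \<in> H" "a \<noteq> b" "\<forall>w\<in>H. adj c S v w \<longleftrightarrow> w = a \<or> w = b"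
    using hole_two_neighbours[OF assms(1,2)] by blast
  then show thesis
    using that assms(3,4) by metis
qed

section \<open>Graphs derived from Burling trees\<close>

locale burling = rooted +
  fixes l :: "'a \<Rightarrow> 'a" and c :: "'a \<Rightarrow> 'a set"
  assumes burling: "burling_tree V r p l c"
begin

lemma last_born_out_empty: "last_born V r p l v \<Longrightarrow> c v = {}"
  using burling by (auto simp: burling_tree_def last_born_def)

lemma out_nonempty_last_sibling:
  assumes "t \<in> V" "c t \<noteq> {}"
  shows "t \<noteq> r" and "l (p t) \<noteq> t" and "l (p t) \<in> V" and "l (p t) \<noteq> r"
    and "p (l (p t)) = p t"
proof -
  show "t \<noteq> r" "l (p t) \<noteq> t"
    using burling assms by (auto simp: burling_tree_def last_born_def)
  then have "t \<in> children V r p (p t)" "p t \<in> V"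
    using assms(1) parent_in_V by (auto simp: children_def)
  then have "l (p t) \<in> children V r p (p t)"
    using burling by (auto simp: burling_tree_def is_leaf_def)
  then show "l (p t) \<in> V" "l (p t) \<noteq> r" "p (l (p t)) = p t"
    by (auto simp: children_def)
qed

lemma out_set_interval:
  assumes "t \<in> V" "c t \<noteq> {}"
  obtains s where "s \<in> V" "c t = {w. l (p t) \<preceq> w \<and> w \<preceq> s}"
proof -
  have "\<not> last_born V r p l t"
    using last_born_out_empty assms(2) by blast
  then have "branch_set V r p (l (p t)) (c t)"
    using burling assms out_nonempty_last_sibling(1)[OF assms] by (auto simp: burling_tree_def)
  then show thesis
    using that branch_set_interval assms(2) by blast
qed

lemma depth_last_sibling:
  assumes "t \<in> V" "c t \<noteq> {}"
  shows "depth (l (p t)) = depth t"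
  using out_nonempty_last_sibling[OF assms] depth_parent assms(1) by metis

end

locale derived_graph = burling +
  fixes S :: "'a set"
  assumes S_subset: "S \<subseteq> V"
begin

lemma arcD: "arc c S t s \<Longrightarrow> t \<in> V \<and> s \<in> V \<and> s \<in> c t"
  using S_subset by (auto simp: arc_def)

lemma arc_last_sibling_anc:
  assumes "arc c S t s"
  shows "l (p t) \<preceq> s"
proof -
  have "t \<in> V" "s \<in> c t"
    using arcD[OF assms] by auto
  then show ?thesis
    using out_set_interval by blast
qed

lemma arc_depth_le: "arc c S t s \<Longrightarrow> depth t \<le> depth s"
  using arc_last_sibling_anc anc_depth_le depth_last_sibling arcD by fastforce

lemma arc_depth_eq_out_empty:
  assumes "arc c S t s" "depth s = depth t"
  shows "c s = {}"
proof -
  have t: "t \<in> V" "c t \<noteq> {}"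
    using arcD[OF assms(1)] by auto
  then have "s = l (p t)"
    using anc_depth_eq arc_last_sibling_anc[OF assms(1)] depth_last_sibling assms(2) by metis
  then have "last_born V r p l s"
    using out_nonempty_last_sibling[OF t] by (simp add: last_born_def)
  then show ?thesis
    by (rule last_born_out_empty)
qed

lemma arc_asym: "arc c S u v \<Longrightarrow> \<not> arc c S v u"
  using arc_depth_le arc_depth_eq_out_empty arcD by (metis empty_iff le_antisym)

lemma arc_incomparable:
  assumes "arc c S u v"
  shows "\<not> u \<preceq> v" and "\<not> v \<preceq> u"
proof -
  have u: "u \<in> V" "c u \<noteq> {}"
    using arcD[OF assms] by auto
  have sib: "l (p u) \<preceq> v" "depth (l (p u)) = depth u" "l (p u) \<noteq> u"
    using arc_last_sibling_anc[OF assms] depth_last_sibling[OF u] out_nonempty_last_sibling[OF u]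
    by auto
  show "\<not> u \<preceq> v"
    using sib anc_linear anc_depth_eq by metis
  show "\<not> v \<preceq> u"
    using sib anc_depth_eq by (metis rtrancl_trans)
qed

lemma adj_incomparable: "adj c S u v \<Longrightarrow> \<not> u \<preceq> v \<and> \<not> v \<preceq> u"
  using arc_incomparable by (auto simp: adj_def)

lemma adj_irrefl: "adj c S u v \<Longrightarrow> u \<noteq> v"
  using adj_incomparable by blast

lemma out_neighbours_comparable:
  assumes "arc c S t v" "arc c S t w"
  shows "v \<preceq> w \<or> w \<preceq> v"
proof -
  have "t \<in> V" "c t \<noteq> {}"
    using arcD[OF assms(1)] by auto
  then obtain s where "c t = {u. l (p t) \<preceq> u \<and> u \<preceq> s}"
    using out_set_interval by blast
  then show ?thesis
    using arcD[OF assms(1)] arcD[OF assms(2)] anc_linear by blast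
qed

lemma adj_leaving_subtree:
  assumes "u \<in> S" "u \<preceq> s" "\<not> u \<preceq> t" "adj c S s t"
  shows "s = u \<or> (arc c S t u \<and> arc c S t s)"
proof (cases "arc c S s t")
  case True
  have s: "s \<in> V" "c s \<noteq> {}"
    using arcD[OF True] by auto
  have "p s \<preceq> l (p s)"
    using anc_parent out_nonempty_last_sibling[OF s] by metis
  then have "\<not> u \<preceq> p s"
    using assms(3) arc_last_sibling_anc[OF True] by (meson rtrancl_trans)
  then show ?thesis
    using anc_parent_if_neq(1) assms(2) by blast
next
  case False
  then have ts: "arc c S t s"
    using assms(4) by (simp add: adj_def)
  have t: "t \<in> V" "c t \<noteq> {}"
    using arcD[OF ts] by auto
  obtain s0 where out: "c t = {w. l (p t) \<preceq> w \<and> w \<preceq> s0}"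
    using out_set_interval[OF t] by blast
  have "p t \<preceq> t"
    using anc_parent t(1) out_nonempty_last_sibling(1)[OF t] by blast
  then have "\<not> u \<preceq> p (l (p t))"
    using assms(3) out_nonempty_last_sibling(5)[OF t] by (metis rtrancl_trans)
  then have "l (p t) \<preceq> u"
    using anc_linear[OF assms(2)] anc_parent_if_neq(1) arc_last_sibling_anc[OF ts] by blast
  then have "u \<in> c t"
    using out arcD[OF ts] assms(2) by (auto intro: rtrancl_trans)
  then show ?thesis
    using ts assms(1) by (auto simp: arc_def)
qed

lemma finite_set_has_sink:
  assumes "finite X" "X \<noteq> {}"
  obtains v where "v \<in> X" "\<forall>w\<in>X. \<not> arc c S v w"
proof -
  have "Max (depth ` X) \<in> depth ` X"
    using assms by simp
  then obtain v where "v \<in> X" "depth v = Max (depth ` X)"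
    by (metis imageE)
  then have v: "v \<in> X" "\<forall>w\<in>X. depth w \<le> depth v"
    using assms(1) by simp_all
  show thesis
  proof (cases "\<exists>w\<in>X. arc c S v w")
    case True
    then obtain w where w: "w \<in> X" "arc c S v w"
      by blast
    then have "c w = {}"
      using v arc_depth_le arc_depth_eq_out_empty by (metis le_antisym)
    then show thesis
      using that w(1) by (auto simp: arc_def)
  next
    case False
    then show thesis
      using that v(1) by blast
  qed
qed

lemma triangle_free:
  assumes "adj c S u v" "adj c S v w" "adj c S u w"
  shows False
proof -
  have no_fork: False if "arc c S a b" "arc c S a d" "adj c S b d" for a b d
    using out_neighbours_comparable adj_incomparable that by blast
  have no_sink: False if "adj c S a b" "adj c S a s" "adj c S b s" "\<not> arc c S s a" "\<not> arc c S s b"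
    for a b s
    using that no_fork[of a b s] no_fork[of b a s] adj_sym[of c S b a] by (auto simp: adj_def)
  obtain s where "s \<in> {u, v, w}" "\<forall>t\<in>{u, v, w}. \<not> arc c S s t"
    using finite_set_has_sink[of "{u, v, w}"] by auto
  then show False
    using no_sink assms adj_sym by (metis insertCI insertE singletonD)
qed

section \<open>The pivot of a hole\<close>

definition apex :: "'a set \<Rightarrow> 'a \<Rightarrow> bool" where
  "apex H z \<longleftrightarrow> z \<in> H \<and> (\<forall>v\<in>H. z \<preceq> v \<or> adj c S z v)"

lemma apex_if_anc_of_other:
  assumes hole: "hole c S H" and "z \<in> H" "w \<in> H" "w \<noteq> z" "z \<preceq> w"
  shows "apex H z"
proof -
  obtain vs where cycle: "hole_cycle c S H vs" and "H \<subseteq> S"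
    using hole unfolding hole_iff_cycle by blast
  then have "z \<in> S"
    using assms(2) by blast
  obtain t where "z = cyc_nth vs (1 + t)"
    using cyc_nth_onto[OF cycle assms(2), where j = 1] .
  then have z: "z = cyc_nth vs (Suc t)"
    by simp
  define B where "B = (\<lambda>k. cyc_nth vs (t + k)) ` {..<3}"
  have B_iff: "v \<in> B \<longleftrightarrow> v = z \<or> adj c S z v" if "v \<in> H" for v
    using closed_neighbourhood_segment[OF cycle, of t] z that unfolding B_def by blast
  define X where "X = {v \<in> H. z \<preceq> v \<and> v \<noteq> z}"
  have closed: "\<forall>v\<in>X. \<forall>u\<in>H. adj c S v u \<longrightarrow> u \<in> X \<or> u \<in> B"
  proof (intro ballI impI)
    fix v u
    assume v: "v \<in> X" and u: "u \<in> H" and vu: "adj c S v u"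
    show "u \<in> X \<or> u \<in> B"
    proof (cases "z \<preceq> u")
      case True
      have "u \<noteq> z"
        using vu v adj_incomparable unfolding X_def by blast
      then show ?thesis
        using True u unfolding X_def by blast
    next
      case False
      then have "arc c S u z"
        using adj_leaving_subtree[OF \<open>z \<in> S\<close> _ False vu] v unfolding X_def by blast
      then show ?thesis
        using B_iff u by (auto simp: adj_def)
    qed
  qed
  have "w \<in> X" "w \<notin> B"
    using assms(3-5) adj_incomparable B_iff unfolding X_def by auto
  then have "H - B \<subseteq> X"
    using connected_cycle_minus_segment[OF cycle B_def closed] assms(3) by blast
  then show ?thesis
    unfolding apex_def using assms(2) B_iff X_def by blast
qed

lemma anc_of_hole_but_one:
  assumes hole: "hole c S H" and u: "u \<in> S" "u \<notin> H"
    and nbr: "\<forall>w\<in>H. adj c S u w \<longrightarrow> w = b"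
    and x: "x \<in> H" "x \<noteq> b" "u \<preceq> x"
    and v: "v \<in> H" "v \<noteq> b"
  shows "u \<preceq> v"
proof -
  obtain vs where cycle: "hole_cycle c S H vs"
    using hole unfolding hole_iff_cycle by blast
  define B where "B = H \<inter> {b}"
  obtain j m where B_seg: "B = (\<lambda>k. cyc_nth vs (j + k)) ` {..<m}"
  proof (cases "b \<in> H")
    case True
    then obtain t where "b = cyc_nth vs (0 + t)"
      using cyc_nth_onto[OF cycle] by blast
    then show thesis
      using that[of t 1] True unfolding B_def by auto
  next
    case False
    then show thesis
      using that[of 0 0] unfolding B_def by auto
  qed
  define X where "X = {v \<in> H. u \<preceq> v}"
  have closed: "\<forall>v\<in>X. \<forall>w\<in>H. adj c S v w \<longrightarrow> w \<in> X \<or> w \<in> B"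
  proof (intro ballI impI)
    fix v w
    assume v: "v \<in> X" and w: "w \<in> H" and vw: "adj c S v w"
    show "w \<in> X \<or> w \<in> B"
    proof (cases "u \<preceq> w")
      case False
      have "v \<noteq> u"
        using v u(2) unfolding X_def by blast
      then have "arc c S w u"
        using adj_leaving_subtree[OF u(1) _ False vw] v unfolding X_def by blast
      then show ?thesis
        using nbr w unfolding B_def by (auto simp: adj_def)
    qed (use w in \<open>simp add: X_def\<close>)
  qed
  have "H - B \<subseteq> X"
    using connected_cycle_minus_segment[OF cycle B_seg closed] x unfolding X_def B_def by blast
  then show ?thesis
    using v unfolding X_def B_def by blast
qed

lemma hole_vertex_with_two_out_arcs:
  assumes hole: "hole c S H"
  obtains q w1 w2 where "w1 \<in> H" "w2 \<in> H" "w1 \<noteq> w2" "arc c S q w1" "arc c S q w2"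
proof -
  obtain vs where "hole_cycle c S H vs"
    using hole unfolding hole_iff_cycle by blast
  then have "cyc_nth vs 0 \<in> H"
    by (rule cyc_nth_in)
  then obtain u where u: "u \<in> H" "\<forall>w\<in>H. depth u \<le> depth w"
    using ex_has_least_nat[of "\<lambda>v. v \<in> H" _ depth] by blast
  obtain a b where ab: "a \<in> H" "b \<in> H" "a \<noteq> b" "\<forall>w\<in>H. adj c S u w \<longleftrightarrow> w = a \<or> w = b"
    using hole_two_neighbours[OF hole u(1)] by blast
  show thesis
  proof (cases "arc c S u a \<and> arc c S u b")
    case True
    then show thesis
      using that ab by blast
  next
    case False
    then obtain t where t: "t \<in> H" "arc c S t u"
      using ab by (auto simp: adj_def)
    then have depth_t: "depth t = depth u"
      using arc_depth_le u by (meson le_antisym)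
    have "adj c S t u"
      using t(2) by (simp add: adj_def)
    then obtain s where s: "s \<in> H" "s \<noteq> u" "adj c S t s"
      using hole_other_neighbour[OF hole t(1) u(1)] by blast
    have "arc c S t s"
    proof (rule ccontr)
      assume "\<not> arc c S t s"
      then have "arc c S s t"
        using s(3) by (simp add: adj_def)
      moreover have "depth t = depth s"
        using arc_depth_le[OF calculation] depth_t u(2) s(1) by fastforce
      ultimately have "c t = {}"
        by (rule arc_depth_eq_out_empty)
      then show False
        using t(2) by (simp add: arc_def)
    qed
    then show thesis
      using that s t u(1) by blast
  qed
qed

lemma hole_has_apex:
  assumes hole: "hole c S H"
  obtains z where "apex H z"
proof -
  obtain q w1 w2 where w: "w1 \<in> H" "w2 \<in> H" "w1 \<noteq> w2" "arc c S q w1" "arc c S q w2"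
    using hole_vertex_with_two_out_arcs[OF hole] by blast
  then have "w1 \<preceq> w2 \<or> w2 \<preceq> w1"
    using out_neighbours_comparable by blast
  then show thesis
    using apex_if_anc_of_other[OF hole] that w(1-3) by metis
qed

lemma apexes_adjacent:
  assumes "apex H z" "apex H z'" "z \<noteq> z'"
  shows "adj c S z z'"
  using assms anc_antisym unfolding apex_def adj_def by blast

lemma apex_neighbour_out_arc:
  assumes hole: "hole c S H" and apex: "apex H z"
    and a: "a \<in> H" "adj c S z a" and w: "w \<in> H" "adj c S a w"
  shows "arc c S a w"
proof -
  have z: "z \<in> H" "z \<in> S"
    using apex hole unfolding apex_def hole_def by auto
  have "adj c S a z"
    using a(2) by (auto simp: adj_def)
  then obtain s where s: "s \<in> H" "s \<noteq> z" "adj c S a s" "\<forall>w\<in>H. adj c S a w \<longrightarrow> w = z \<or> w = s"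
    using hole_other_neighbour[OF hole a(1) z(1)] by blast
  have "\<not> adj c S z s"
    using triangle_free a(2) s(3) by blast
  then have "z \<preceq> s"
    using apex s(1) unfolding apex_def by blast
  moreover have "\<not> z \<preceq> a" "adj c S s a"
    using adj_incomparable a(2) s(3) by (auto simp: adj_def)
  ultimately have "arc c S a z \<and> arc c S a s"
    using adj_leaving_subtree[OF z(2)] s(2) by blast
  then show ?thesis
    using s(4) w by blast
qed

lemma apex_is_sink:
  assumes "hole c S H" "apex H z"
  shows "hole_sink c S H z"
proof -
  have "\<not> arc c S z u" if "u \<in> H" for u
  proof
    assume "arc c S z u"
    then have "arc c S u z"
      using apex_neighbour_out_arc[OF assms that] assms(2) by (auto simp: adj_def apex_def)
    then show False
      using arc_asym \<open>arc c S z u\<close> by blast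
  qed
  then show ?thesis
    using assms(2) by (auto simp: hole_sink_def apex_def)
qed

lemma antenna_if_apex_adj:
  assumes hole: "hole c S H" and apex: "apex H z" and v: "v \<in> H" "adj c S z v"
  shows "antenna c S H v"
proof -
  have "\<not> arc c S u v" if "u \<in> H" for u
  proof
    assume uv: "arc c S u v"
    then have "adj c S v u"
      by (simp add: adj_def)
    then have "arc c S v u"
      using apex_neighbour_out_arc[OF hole apex v that] by blast
    then show False
      using arc_asym uv by blast
  qed
  then show ?thesis
    using v by (auto simp: hole_source_def)
qed

lemma apex_adj_if_antenna:
  assumes hole: "hole c S H" and apex: "apex H z" and "antenna c S H v"
  shows "adj c S z v"
proof (rule ccontr)
  assume not_adj: "\<not> adj c S z v"
  have v: "v \<in> H" and no_in: "\<forall>u\<in>H. \<not> arc c S u v"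
    using assms(3) by (auto simp: hole_source_def)
  obtain a b where ab: "a \<in> H" "b \<in> H" "a \<noteq> b"
    and nbr: "\<forall>w\<in>H. adj c S v w \<longleftrightarrow> w = a \<or> w = b"
    using hole_two_neighbours[OF hole v] .
  then have "adj c S v a" "adj c S v b"
    by simp_all
  then have arcs: "arc c S v a" "arc c S v b"
    using no_in ab(1,2) by (auto simp: adj_def)
  obtain w1 w2 where w: "w1 \<in> H" "w2 \<in> H" "w1 \<noteq> w2" "arc c S v w1" "w1 \<preceq> w2"
  proof (cases "a \<preceq> b")
    case True
    then show thesis
      using that[of a b] ab(1-3) arcs(1) by blast
  next
    case False
    then have "b \<preceq> a"
      using out_neighbours_comparable[OF arcs] by blast
    then show thesis
      using that[of b a] ab(1-3) arcs(2) by blast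
  qed
  have "w1 \<noteq> z"
    using w(4) not_adj by (auto simp: adj_def)
  then have "adj c S z w1"
    using apexes_adjacent[OF apex apex_if_anc_of_other[OF hole w(1,2)]] w(3,5) by blast
  moreover have "adj c S w1 v"
    using w(4) by (simp add: adj_def)
  ultimately have "arc c S w1 v"
    using apex_neighbour_out_arc[OF hole apex w(1) _ v] by blast
  then show False
    using arc_asym w(4) by blast
qed

lemma antenna_iff_apex_adj:
  assumes "hole c S H" "apex H z"
  shows "antenna c S H v \<longleftrightarrow> v \<in> H \<and> adj c S z v"
  using antenna_if_apex_adj[OF assms] apex_adj_if_antenna[OF assms] by (auto simp: hole_source_def)

lemma pivot_iff_apex:
  assumes hole: "hole c S H"
  shows "pivot V r p c S H z \<longleftrightarrow> apex H z"
proof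
  assume "pivot V r p c S H z"
  then show "apex H z"
    unfolding pivot_def apex_def hole_sink_def ancestor_iff by blast
next
  assume apex: "apex H z"
  have "H \<subseteq> V"
    using hole S_subset by (auto simp: hole_def)
  then have "ancestor V r p z v" if "v \<in> H" "\<not> antenna c S H v" for v
    using that apex antenna_iff_apex_adj[OF hole apex] ancestor_iff unfolding apex_def by blast
  then show "pivot V r p c S H z"
    unfolding pivot_def using apex_is_sink[OF hole apex] antenna_iff_apex_adj[OF hole apex] by blast
qed

lemma hole_has_pivot:
  assumes "hole c S H"
  obtains z where "pivot V r p c S H z"
  using hole_has_apex pivot_iff_apex assms by metis

end

section \<open>Dominoes\<close>

lemma is_domino_swap_holes: "is_domino c S H1 H2 x y \<Longrightarrow> is_domino c S H2 H1 x y"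
  unfolding is_domino_def by blast

lemma is_domino_swap_edge: "is_domino c S H1 H2 x y \<Longrightarrow> is_domino c S H1 H2 y x"
  unfolding is_domino_def adj_def by blast

context derived_graph
begin

lemma domino_desc_not_anc_across:
  assumes dom: "is_domino c S H H' x y"
    and u: "u \<in> H" "u \<notin> H'" "x \<preceq> u"
    and v: "v \<in> H'" "v \<noteq> y" "u \<preceq> v"
  shows False
proof -
  have hole: "hole c S H'" and inter: "H \<inter> H' = {x, y}" and "x \<noteq> y" and "S = H \<union> H'"
    and edges: "\<forall>a b. adj c S a b \<longrightarrow> {a, b} \<subseteq> H \<or> {a, b} \<subseteq> H'"
    using dom by (auto simp: is_domino_def)
  have nbr: "\<forall>w\<in>H'. adj c S u w \<longrightarrow> w = y"
  proof (intro ballI impI)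
    fix w
    assume w: "w \<in> H'" "adj c S u w"
    then have "w \<in> {x, y}"
      using edges u(2) inter by blast
    moreover have "w \<noteq> x"
      using adj_incomparable w(2) u(3) by blast
    ultimately show "w = y"
      by blast
  qed
  have "x \<in> H'" "x \<noteq> y" "u \<in> S"
    using inter \<open>x \<noteq> y\<close> \<open>S = H \<union> H'\<close> u(1) by auto
  then have "u \<preceq> x"
    using anc_of_hole_but_one[OF hole _ u(2) nbr v] by blast
  then show False
    using anc_antisym u(2,3) \<open>x \<in> H'\<close> by blast
qed

lemma domino_endpoint_not_apex_of_both:
  assumes dom: "is_domino c S H H' x y" and apex: "apex H x" and apex': "apex H' x"
  shows False
proof -
  have hole: "hole c S H" and hole': "hole c S H'" and inter: "H \<inter> H' = {x, y}"
    and xy: "adj c S x y"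
    using dom by (auto simp: is_domino_def)
  have in_both: "x \<in> H" "x \<in> H'" "y \<in> H" "y \<in> H'"
    using inter by auto
  have yx: "adj c S y x"
    using xy by (auto simp: adj_def)
  have "antenna c S H y" "antenna c S H' y"
    using antenna_if_apex_adj[OF hole apex] antenna_if_apex_adj[OF hole' apex'] in_both xy by blast+
  then have no_in: "\<forall>u\<in>H. \<not> arc c S u y" "\<forall>u\<in>H'. \<not> arc c S u y"
    by (auto simp: hole_source_def)
  obtain y1 where y1: "y1 \<in> H" "y1 \<noteq> x" "adj c S y y1"
    using hole_other_neighbour[OF hole in_both(3,1) yx] by blast
  obtain y2 where y2: "y2 \<in> H'" "y2 \<noteq> x" "adj c S y y2"
    using hole_other_neighbour[OF hole' in_both(4,2) yx] by blast
  have arcs: "arc c S y y1" "arc c S y y2"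
    using y1 y2 no_in by (auto simp: adj_def)
  have "y1 \<noteq> y" "y2 \<noteq> y"
    using adj_irrefl y1(3) y2(3) by blast+
  then have outside: "y1 \<notin> H'" "y2 \<notin> H"
    using inter y1(1,2) y2(1,2) by blast+
  have "\<not> adj c S x y1" "\<not> adj c S x y2"
    using triangle_free xy y1(3) y2(3) by blast+
  then have "x \<preceq> y1" "x \<preceq> y2"
    using apex apex' y1(1) y2(1) unfolding apex_def by blast+
  moreover have "y1 \<preceq> y2 \<or> y2 \<preceq> y1"
    using out_neighbours_comparable[OF arcs] .
  ultimately show False
    using domino_desc_not_anc_across[OF dom y1(1) outside(1)] \<open>y2 \<noteq> y\<close> y2(1)
      domino_desc_not_anc_across[OF is_domino_swap_holes[OF dom] y2(1) outside(2)] \<open>y1 \<noteq> y\<close> y1(1)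
    by blast
qed

lemma domino_pivot_at_endpoint_subordinate:
  assumes dom: "is_domino c S H H' x y" and piv: "pivot V r p c S H x"
  shows "subordinate V r p c S H' x"
proof -
  have hole: "hole c S H" and hole': "hole c S H'" and inter: "H \<inter> H' = {x, y}"
    and xy: "adj c S x y"
    using dom by (auto simp: is_domino_def)
  have apex: "apex H x"
    using piv pivot_iff_apex[OF hole] by blast
  have in_both: "x \<in> H" "x \<in> H'" "y \<in> H" "y \<in> H'"
    using inter by auto
  have "adj c S y x"
    using xy by (auto simp: adj_def)
  then have "arc c S y x"
    using apex_neighbour_out_arc[OF hole apex in_both(3) xy in_both(1)] by blast
  then have "\<not> antenna c S H' x"
    using in_both(4) by (auto simp: hole_source_def)
  moreover have "\<not> pivot V r p c S H' x"
    using domino_endpoint_not_apex_of_both[OF dom apex] pivot_iff_apex[OF hole'] by blast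
  ultimately show ?thesis
    unfolding subordinate_def using in_both(2) by blast
qed

lemma domino_pivot_off_edge_anc:
  assumes dom: "is_domino c S H H' x y" and piv: "pivot V r p c S H z"
    and z: "z \<notin> H'" and v: "v \<in> H'" "v \<notin> H"
  shows "z \<preceq> v"
proof -
  have hole: "hole c S H" and hole': "hole c S H'" and inter: "H \<inter> H' = {x, y}"
    and xy: "adj c S x y" and "S = H \<union> H'"
    and edges: "\<forall>a b. adj c S a b \<longrightarrow> {a, b} \<subseteq> H \<or> {a, b} \<subseteq> H'"
    using dom by (auto simp: is_domino_def)
  have apex: "apex H z"
    using piv pivot_iff_apex[OF hole] by blast
  have "z \<in> H"
    using apex by (simp add: apex_def)
  then have "z \<in> S"
    using \<open>S = H \<union> H'\<close> by blast
  define b where "b = (if adj c S z x then x else y)"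
  define w where "w = (if adj c S z x then y else x)"
  have "\<not> (adj c S z x \<and> adj c S z y)"
    using triangle_free xy by blast
  then have w: "w \<in> H" "w \<in> H'" "w \<noteq> b" "\<not> adj c S z w"
    using inter adj_irrefl xy unfolding b_def w_def by auto
  have nbr: "\<forall>u\<in>H'. adj c S z u \<longrightarrow> u = b"
  proof (intro ballI impI)
    fix u
    assume u: "u \<in> H'" "adj c S z u"
    then have "u \<in> {x, y}"
      using edges z inter by blast
    then show "u = b"
      using u(2) \<open>\<not> (adj c S z x \<and> adj c S z y)\<close> unfolding b_def by auto
  qed
  have "w \<noteq> z"
    using w(2) z by blast
  then have "z \<preceq> w"
    using apex w(1,4) unfolding apex_def by blast
  moreover have "v \<noteq> b"
    using v(2) inter unfolding b_def by auto
  ultimately show ?thesis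
    using anc_of_hole_but_one[OF hole' \<open>z \<in> S\<close> z nbr w(2,3) _ v(1)] by blast
qed

lemma domino_some_pivot_on_edge:
  assumes dom: "is_domino c S H1 H2 x y"
    and piv: "pivot V r p c S H1 z1" "pivot V r p c S H2 z2"
  shows "z1 \<in> {x, y} \<or> z2 \<in> {x, y}"
proof (rule ccontr)
  assume off: "\<not> (z1 \<in> {x, y} \<or> z2 \<in> {x, y})"
  have "z1 \<in> H1" "z2 \<in> H2"
    using piv by (auto simp: pivot_def hole_sink_def)
  moreover have "H1 \<inter> H2 = {x, y}"
    using dom by (simp add: is_domino_def)
  ultimately have "z1 \<notin> H2" "z2 \<notin> H1"
    using off by blast+
  then have "z1 \<preceq> z2" "z2 \<preceq> z1"
    using domino_pivot_off_edge_anc[OF dom piv(1)] \<open>z2 \<in> H2\<close>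
      domino_pivot_off_edge_anc[OF is_domino_swap_holes[OF dom] piv(2)] \<open>z1 \<in> H1\<close>
    by blast+
  then show False
    using anc_antisym \<open>z1 \<in> H1\<close> \<open>z2 \<notin> H1\<close> by blast
qed

lemma domino_pivot_on_edge_subordinate:
  assumes "is_domino c S H H' x y" "pivot V r p c S H z" "z \<in> {x, y}"
  shows "subordinate V r p c S H' z"
proof (cases "z = x")
  case True
  then show ?thesis
    using assms(1,2) domino_pivot_at_endpoint_subordinate by blast
next
  case False
  then show ?thesis
    using assms domino_pivot_at_endpoint_subordinate[OF is_domino_swap_edge[OF assms(1)]] by auto
qed

end

theorem lemma6p3:
  fixes V :: "'a set" and r :: 'a and p l :: "'a \<Rightarrow> 'a" and c :: "'a \<Rightarrow> 'a set"
    and S H1 H2 :: "'a set" and x y :: 'a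
  assumes "burling_tree V r p l c"
    and "S \<subseteq> V"
    and "is_domino c S H1 H2 x y"
  shows "\<exists>z\<in>{x, y}. \<exists>i\<in>{1::nat, 2}.
           (let Hi = (if i = 1 then H1 else H2); Hj = (if i = 1 then H2 else H1) in
             pivot V r p c S Hi z \<and> subordinate V r p c S Hj z)"
proof -
  interpret derived_graph V r p l c S
    using assms(1,2) by unfold_locales (auto simp: burling_tree_def)
  have "hole c S H1" "hole c S H2"
    using assms(3) by (auto simp: is_domino_def)
  then obtain z1 z2 where piv: "pivot V r p c S H1 z1" "pivot V r p c S H2 z2"
    using hole_has_pivot by metis
  consider "z1 \<in> {x, y}" | "z2 \<in> {x, y}"
    using domino_some_pivot_on_edge[OF assms(3) piv] by blast
  then show ?thesis
  proof cases
    case 1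
    then have "subordinate V r p c S H2 z1"
      using domino_pivot_on_edge_subordinate[OF assms(3) piv(1)] by blast
    then show ?thesis
      using 1 piv(1) by (intro bexI[of _ z1] bexI[of _ "1::nat"]) auto
  next
    case 2
    then have "subordinate V r p c S H1 z2"
      using domino_pivot_on_edge_subordinate[OF is_domino_swap_holes[OF assms(3)] piv(2)] by blast
    then show ?thesis
      using 2 piv(2) by (intro bexI[of _ z2] bexI[of _ "2::nat"]) auto
  qed
qed

end
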